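(* Let $k,d\in\mathbb{N}$, $\mathbf{l}\in\mathbb{N}^{d^2}$ and $\mathbf{i}\in I_{\mathbf{l}}$. Define $\Phi_{\mathbf{l},\mathbf{i}}:[0,1]^{d\times d}\to[0,1]^{d\times d}$ by $[\Phi_{\mathbf{l},\mathbf{i}}(X)]_{m,n}=\phi_{l_j,i_j}([X]_{m,n})$ with $j=(m-1)d+n$, for $m,n\in\{1,\dots,d\}$. Then $\Phi_{\mathbf{l},\mathbf{i}}\in \mathcal{C}^{W,L}_{2k+1}(\mathbb{R}^{d\times d},\mathbb{R}^{d\times d})$ (i.e. coincides on $[0,1]^{d\times d}$ with a member of this class) with $W=2d^2$ and $L=\lfloor\frac{5}{2}d\rfloor+3$.
   Context: Hat functions: $\phi(x)=1-|x|$ for $x\in[-1,1]$, $0$ otherwise; for $l\in\mathbb N$, $h_l=2^{-l}$, $x_{l,i}=ih_l$, $\phi_{l,i}(x)=\phi((x-x_{l,i})/h_l)$. For $\mathbf l\in\mathbb N^{d^2}$, $I_{\mathbf l}=\{\mathbf i\in\mathbb N^{d^2}:1\le i_j\le 2^{l_j}-1,\ i_j\text{ odd for all }j\}$. CNN notation: ReLU $\sigma(x)=\max\{x,0\}$ entrywise; $\mathbb R^{d\times d}\cong\mathbb R^{1\times d\times d}$; for $X\in\mathbb R^{c\times d\times d}$, zero padding $[\iota(X)]_{q,m,n}=[X]_{q,m,n}$ if $m,n\in\{1,\dots,d\}$, else $0$; for $K\in\mathbb R^{c'\times c\times(2k+1)\times(2k+1)}$ (indices $s,t\in\{-k,\dots,k\}$),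 $[K*X]_{p,m,n}=\sum_q\sum_{s,t=-k}^k[K]_{p,q,s,t}[\iota(X)]_{q,m+s,n+t}$; $A_{K,\mathbf b}(X)=K*X+\mathbf b\mathbf 1_{d\times d}$, $[\mathbf b\mathbf 1_{d\times d}]_{p,m,n}=b_p$. An $L$-layer ReLU CNN with channels $c_0,\dots,c_L$ and kernel spatial size $2k+1$ is $\sigma\circ A_{K^L,\mathbf b^L}\circ\cdots\circ\sigma\circ A_{K^1,\mathbf b^1}$, $K^l\in\mathbb R^{c_l\times c_{l-1}\times(2k+1)\times(2k+1)}$, $\mathbf b^l\in\mathbb R^{c_l}$; width $\max\{c_1,\dots,c_L\}$, depth $L$. $\mathcal C^{W,L}_{2k+1}(\mathbb R^{c_0\times d\times d},\mathbb R^{c_L\times d\times d})$ is the set of such maps of width $W$ and depth $L$. *)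

theory Defs
  imports Complex_Main
begin

definition hat :: "real \<Rightarrow> real" where
  "hat x = (if \<bar>x\<bar> \<le> 1 then 1 - \<bar>x\<bar> else 0)"

definition hat_li :: "nat \<Rightarrow> nat \<Rightarrow> real \<Rightarrow> real" where
  "hat_li l i x = hat ((x - real i * (1/2)^l) / (1/2)^l)"

definition I_set :: "nat \<Rightarrow> (nat \<Rightarrow> nat) \<Rightarrow> (nat \<Rightarrow> nat) set" where
  "I_set N l = {i. \<forall>j\<in>{1..N}. 1 \<le> i j \<and> i j \<le> 2 ^ l j - 1 \<and> odd (i j)}"

text \<open>A tensor in R^{c x d x d}: channel index (1..c), row index, column index (1..d).
  Spatial indices are integers so that padding can be expressed.\<close>
type_synonym tensor = "nat \<Rightarrow> int \<Rightarrow> int \<Rightarrow> real"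
text \<open>Kernel entries [K]_{p,q,s,t}, s,t in -k..k.\<close>
type_synonym kernel = "nat \<Rightarrow> nat \<Rightarrow> int \<Rightarrow> int \<Rightarrow> real"

definition relu :: "real \<Rightarrow> real" where
  "relu x = max x 0"

definition zpad :: "nat \<Rightarrow> tensor \<Rightarrow> tensor" where
  "zpad d X q m n = (if 1 \<le> m \<and> m \<le> int d \<and> 1 \<le> n \<and> n \<le> int d then X q m n else 0)"

definition conv :: "nat \<Rightarrow> nat \<Rightarrow> nat \<Rightarrow> kernel \<Rightarrow> tensor \<Rightarrow> tensor" where
  "conv d k c K X p m n =
     (\<Sum>q\<in>{1..c}. \<Sum>s\<in>{-int k..int k}. \<Sum>t\<in>{-int k..int k}.
        K p q s t * zpad d X q (m + s) (n + t))"

definition cnn_layer :: "nat \<Rightarrow> nat \<Rightarrow> nat \<Rightarrow> kernel \<Rightarrow> (nat \<Rightarrow> real) \<Rightarrow> tensor \<Rightarrow> tensor" where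
  "cnn_layer d k c K b X p m n = relu (conv d k c K X p m n + b p)"

text \<open>A layer is (c_in, c_out, K, b).\<close>
type_synonym layer = "nat \<times> nat \<times> kernel \<times> (nat \<Rightarrow> real)"

fun cnn_eval :: "nat \<Rightarrow> nat \<Rightarrow> layer list \<Rightarrow> tensor \<Rightarrow> tensor" where
  "cnn_eval d k [] X = X"
| "cnn_eval d k ((c, c', K, b) # Ls) X = cnn_eval d k Ls (cnn_layer d k c K b X)"

definition layer_cin :: "layer \<Rightarrow> nat" where "layer_cin L = fst L"
definition layer_cout :: "layer \<Rightarrow> nat" where "layer_cout L = fst (snd L)"

definition cnn_arch :: "nat \<Rightarrow> nat \<Rightarrow> nat \<Rightarrow> nat \<Rightarrow> layer list \<Rightarrow> bool" where
  "cnn_arch c0 cL W Lnum Ls \<longleftrightarrow>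
     Lnum \<ge> 1 \<and> length Ls = Lnum \<and>
     layer_cin (Ls ! 0) = c0 \<and> layer_cout (Ls ! (Lnum - 1)) = cL \<and>
     (\<forall>j. Suc j < Lnum \<longrightarrow> layer_cout (Ls ! j) = layer_cin (Ls ! Suc j)) \<and>
     W = Max (layer_cout ` set Ls)"

definition CNN_class :: "nat \<Rightarrow> nat \<Rightarrow> nat \<Rightarrow> nat \<Rightarrow> nat \<Rightarrow> nat \<Rightarrow> (tensor \<Rightarrow> tensor) set" where
  "CNN_class d k c0 cL W Lnum = {f. \<exists>Ls. cnn_arch c0 cL W Lnum Ls \<and> f = cnn_eval d k Ls}"

end

theory Submission
  imports Defs
begin

text \<open>The network first computes, at every pixel (m, n), its linear index p = (m - 1) d + n:
  d layers whose kernels shift two counter channels by one pixel count the row and column index,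
  saturating at m and n. Four further layers evaluate all d^2 candidate hats at the pixel,
  penalised so that only the one with index p can be nonzero, and add them up. The depth
  d + 4 \<le> floor (5d/2) + 3 is then filled up with identity layers, which preserve the nonnegative
  output; the widest layer has 2 d^2 channels.\<close>

lemma sum_delta_mult:
  "finite A \<Longrightarrow> (\<Sum>r\<in>A. (if r = a then w else 0) * f r) = (if a \<in> A then w * f a else (0::real))"
  by (simp add: if_distrib if_distribR cong: if_cong)

definition single_tap_kernel :: "(nat \<Rightarrow> int) \<Rightarrow> (nat \<Rightarrow> int) \<Rightarrow> (nat \<Rightarrow> nat \<Rightarrow> real) \<Rightarrow> kernel" where
  "single_tap_kernel S T W p q s t = (if s = S p \<and> t = T p then W p q else 0)"

lemma conv_single_tap_kernel:
  assumes "\<bar>S p\<bar> \<le> int k" "\<bar>T p\<bar> \<le> int k"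
  shows "conv d k c (single_tap_kernel S T W) Y p m n
       = (\<Sum>q\<in>{1..c}. W p q * zpad d Y q (m + S p) (n + T p))"
proof -
  have "(if s = S p \<and> t = T p then W p q else 0) * z
      = (if s = S p then if t = T p then W p q * z else 0 else 0)" for s t q and z :: real
    by simp
  moreover have "(\<Sum>t\<in>B. if P then h t else 0) = (if P then \<Sum>t\<in>B. h t else (0::real))"
    for P B and h :: "int \<Rightarrow> real"
    by simp
  ultimately show ?thesis
    using assms unfolding conv_def single_tap_kernel_def by (simp add: abs_le_iff)
qed

abbreviation pointwise_kernel :: "(nat \<Rightarrow> nat \<Rightarrow> real) \<Rightarrow> kernel" where
  "pointwise_kernel W \<equiv> single_tap_kernel (\<lambda>_. 0) (\<lambda>_. 0) W"

lemma conv_pointwise_kernel: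
  assumes "m \<in> {1..int d}" "n \<in> {1..int d}"
  shows "conv d k c (pointwise_kernel W) Y p m n = (\<Sum>q\<in>{1..c}. W p q * Y q m n)"
  using assms by (subst conv_single_tap_kernel) (auto simp: zpad_def)

lemma cnn_eval_append: "cnn_eval d k (Ls @ Ms) X = cnn_eval d k Ms (cnn_eval d k Ls X)"
  by (induction Ls arbitrary: X) auto

fun channels_chain :: "nat \<Rightarrow> layer list \<Rightarrow> nat \<Rightarrow> bool" where
  "channels_chain c [] c' \<longleftrightarrow> c = c'"
| "channels_chain c ((a, b, K, bias) # Ls) c' \<longleftrightarrow> a = c \<and> channels_chain b Ls c'"

lemma channels_chain_append:
  "channels_chain c (Ls @ Ms) c'' \<longleftrightarrow> (\<exists>c'. channels_chain c Ls c' \<and> channels_chain c' Ms c'')"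
  by (induction c Ls c'' rule: channels_chain.induct) auto

lemma channels_chain_replicate: "channels_chain c (replicate r (c, c, K, bias)) c"
  by (induction r) auto

lemma channels_chain_links:
  "channels_chain c Ls c' \<Longrightarrow> Ls \<noteq> [] \<Longrightarrow>
     layer_cin (hd Ls) = c \<and> layer_cout (last Ls) = c' \<and>
     (\<forall>j. Suc j < length Ls \<longrightarrow> layer_cout (Ls ! j) = layer_cin (Ls ! Suc j))"
proof (induction c Ls c' rule: channels_chain.induct)
  case (2 c a b K bias Ls c')
  show ?case
  proof (cases "Ls = []")
    case True
    then show ?thesis using 2 by (simp add: layer_cin_def layer_cout_def)
  next
    case False
    with 2 have IH: "layer_cin (hd Ls) = b \<and> layer_cout (last Ls) = c' \<and>
        (\<forall>j. Suc j < length Ls \<longrightarrow> layer_cout (Ls ! j) = layer_cin (Ls ! Suc j))"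
      by simp
    have "layer_cout (((a, b, K, bias) # Ls) ! j) = layer_cin (((a, b, K, bias) # Ls) ! Suc j)"
      if "Suc j < length ((a, b, K, bias) # Ls)" for j
      using IH that False by (cases j) (auto simp: layer_cout_def hd_conv_nth)
    with IH False 2 show ?thesis by (simp add: layer_cin_def)
  qed
qed simp

lemma cnn_arch_if_channels_chain:
  assumes "channels_chain c0 Ls cL" "Ls \<noteq> []" "length Ls = L" "W = Max (layer_cout ` set Ls)"
  shows "cnn_arch c0 cL W L Ls"
  using channels_chain_links[OF assms(1,2)] assms(2-4)
  unfolding cnn_arch_def by (auto simp: hd_conv_nth last_conv_nth Suc_le_eq)

definition identity_layer :: layer where
  "identity_layer = (1, 1, pointwise_kernel (\<lambda>_ _. 1), \<lambda>_. 0)"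

lemma identity_layers_eval:
  assumes "\<forall>m\<in>{1..int d}. \<forall>n\<in>{1..int d}. 0 \<le> Y 1 m n"
  shows "\<forall>m\<in>{1..int d}. \<forall>n\<in>{1..int d}. cnn_eval d k (replicate r identity_layer) Y 1 m n = Y 1 m n"
  using assms
proof (induction r arbitrary: Y)
  case (Suc r)
  have "\<forall>m\<in>{1..int d}. \<forall>n\<in>{1..int d}.
      cnn_layer d k 1 (pointwise_kernel (\<lambda>_ _. 1)) (\<lambda>_. 0) Y 1 m n = Y 1 m n"
    using Suc.prems by (simp add: cnn_layer_def conv_pointwise_kernel relu_def)
  with Suc.IH[of "cnn_layer d k 1 (pointwise_kernel (\<lambda>_ _. 1)) (\<lambda>_. 0) Y"] Suc.prems show ?case
    by (simp add: identity_layer_def)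
qed simp

lemma hat_eq_relu: "hat w = relu (1 - relu w - relu (- w))"
  unfolding relu_def hat_def by auto

lemma hat_li_eq_hat: "hat_li l i x = hat (2 ^ l * x - real i)"
proof -
  have "(x - real i * (1/2)^l) / (1/2)^l = 2 ^ l * x - real i"
    by (simp add: power_one_over divide_simps)
  then show ?thesis unfolding hat_li_def by simp
qed

lemma sum_hats_at_position:
  fixes x :: real and l i :: "nat \<Rightarrow> nat"
  assumes "x \<ge> 0" "p \<in> {1..N}"
  shows "(\<Sum>j\<in>{1..N}. hat (2 ^ l j * x - real (i j) + (real (i j) + 1) * \<bar>real p - real j\<bar>))
       = hat_li (l p) (i p) x"
proof -
  have "hat (2 ^ l j * x - real (i j) + (real (i j) + 1) * \<bar>real p - real j\<bar>) = 0" if "j \<noteq> p" for j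
  proof -
    have "\<bar>real p - real j\<bar> \<ge> 1" using that by linarith
    then have "(real (i j) + 1) * \<bar>real p - real j\<bar> \<ge> real (i j) + 1"
      by (simp add: mult_le_cancel_left1)
    moreover have "0 \<le> 2 ^ l j * x" using \<open>x \<ge> 0\<close> by simp
    ultimately have "2 ^ l j * x - real (i j) + (real (i j) + 1) * \<bar>real p - real j\<bar> \<ge> 1"
      by linarith
    then show ?thesis unfolding hat_def by auto
  qed
  then show ?thesis
    using assms(2) by (simp add: sum.remove[of _ p] sum.neutral hat_li_eq_hat)
qed

text \<open>Channel 2 (resp. 3) of a counter layer reads the same channel one pixel up (resp. left) and
  adds 1, while channel 1 passes the nonnegative input through. Zero padding supplies the value 0
  outside the image, so after t layers the two counters hold min m t and min n t.\<close>

definition counter_kernel :: kernel where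
  "counter_kernel = single_tap_kernel (\<lambda>p. if p = 2 then -1 else 0) (\<lambda>p. if p = 3 then -1 else 0)
     (\<lambda>p q. if q = p then 1 else 0)"

definition counter_bias :: "nat \<Rightarrow> real" where
  "counter_bias p = (if p = 1 then 0 else 1)"

definition counts_to :: "nat \<Rightarrow> tensor \<Rightarrow> tensor \<Rightarrow> int \<Rightarrow> bool" where
  "counts_to d X Y t \<longleftrightarrow> (\<forall>m\<in>{1..int d}. \<forall>n\<in>{1..int d}.
     Y 1 m n = X 1 m n \<and> Y 2 m n = of_int (min m t) \<and> Y 3 m n = of_int (min n t))"

lemma cnn_layer_counter:
  assumes "k \<ge> 1" "1 \<le> p"
  shows "cnn_layer d k c counter_kernel counter_bias Y p m n
       = relu ((if p \<le> c then zpad d Y p (m + (if p = 2 then -1 else 0)) (n + (if p = 3 then -1 else 0))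
               else 0) + counter_bias p)"
  using assms unfolding cnn_layer_def counter_kernel_def
  by (subst conv_single_tap_kernel) (auto simp: sum_delta_mult)

lemma zpad_counts_to:
  assumes "counts_to d X Y t" "t \<ge> 0" "m \<in> {1..int d}" "n \<in> {1..int d}"
  shows "zpad d Y 2 (m - 1) n = of_int (min (m - 1) t)"
    and "zpad d Y 3 m (n - 1) = of_int (min (n - 1) t)"
  using assms by (auto simp: counts_to_def zpad_def)

lemma counts_to_first_counter_layer:
  assumes "k \<ge> 1" and X: "\<forall>m\<in>{1..int d}. \<forall>n\<in>{1..int d}. 0 \<le> X 1 m n"
  shows "counts_to d X (cnn_layer d k 1 counter_kernel counter_bias X) 1"
  using X unfolding counts_to_def
  by (simp add: cnn_layer_counter[OF \<open>k \<ge> 1\<close>] zpad_def counter_bias_def relu_def)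

lemma counts_to_next_counter_layer:
  assumes "k \<ge> 1" and Y: "counts_to d X Y t" and "t \<ge> 0"
    and X: "\<forall>m\<in>{1..int d}. \<forall>n\<in>{1..int d}. 0 \<le> X 1 m n"
  shows "counts_to d X (cnn_layer d k 3 counter_kernel counter_bias Y) (t + 1)"
  unfolding counts_to_def
proof (intro ballI conjI)
  fix m n assume m: "m \<in> {1..int d}" and n: "n \<in> {1..int d}"
  show "cnn_layer d k 3 counter_kernel counter_bias Y 1 m n = X 1 m n"
    using Y X m n by (simp add: cnn_layer_counter[OF \<open>k \<ge> 1\<close>] counts_to_def zpad_def counter_bias_def relu_def)
  show "cnn_layer d k 3 counter_kernel counter_bias Y 2 m n = of_int (min m (t + 1))"
    using zpad_counts_to(1)[OF Y \<open>t \<ge> 0\<close> m n] \<open>t \<ge> 0\<close> m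
    by (simp add: cnn_layer_counter[OF \<open>k \<ge> 1\<close>] counter_bias_def relu_def)
  show "cnn_layer d k 3 counter_kernel counter_bias Y 3 m n = of_int (min n (t + 1))"
    using zpad_counts_to(2)[OF Y \<open>t \<ge> 0\<close> m n] \<open>t \<ge> 0\<close> n
    by (simp add: cnn_layer_counter[OF \<open>k \<ge> 1\<close>] counter_bias_def relu_def)
qed

definition counter_layers :: "nat \<Rightarrow> layer list" where
  "counter_layers t = (1, 3, counter_kernel, counter_bias) # replicate (t - 1) (3, 3, counter_kernel, counter_bias)"

lemma counts_to_counter_layers:
  assumes "k \<ge> 1" "t \<ge> 1" and X: "\<forall>m\<in>{1..int d}. \<forall>n\<in>{1..int d}. 0 \<le> X 1 m n"
  shows "counts_to d X (cnn_eval d k (counter_layers t) X) (int t)"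
proof -
  have "counts_to d X (cnn_eval d k (replicate r (3, 3, counter_kernel, counter_bias)) Y) (s + int r)"
    if "counts_to d X Y s" "s \<ge> 0" for Y s r
    using that
  proof (induction r arbitrary: Y s)
    case (Suc r)
    then show ?case
      using counts_to_next_counter_layer[OF \<open>k \<ge> 1\<close> Suc.prems X] Suc.IH[of _ "s + 1"]
      by (simp add: add.assoc)
  qed simp
  from this[of _ 1 "t - 1"] show ?thesis
    using counts_to_first_counter_layer[of k d X] assms by (simp add: counter_layers_def)
qed

lemma pixel_index_range:
  assumes "m \<in> {1..int d}" "n \<in> {1..int d}"
  shows "nat ((m - 1) * int d + n) \<in> {1..d^2}"
    and "real (nat ((m - 1) * int d + n)) = of_int ((m - 1) * int d + n)"
proof -
  have "0 \<le> (m - 1) * int d" "(m - 1) * int d \<le> (int d - 1) * int d"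
    using assms by (auto intro: mult_right_mono)
  moreover have "(int d - 1) * int d + int d = int d * int d"
    by (simp add: algebra_simps)
  moreover have "1 \<le> n" "n \<le> int d"
    using assms by auto
  ultimately have "1 \<le> (m - 1) * int d + n" "(m - 1) * int d + n \<le> int d * int d"
    by linarith+
  then show "nat ((m - 1) * int d + n) \<in> {1..d^2}"
      and "real (nat ((m - 1) * int d + n)) = of_int ((m - 1) * int d + n)"
    by (auto simp: power2_eq_square nat_le_iff)
qed

definition encodes_position :: "nat \<Rightarrow> nat \<Rightarrow> (nat \<Rightarrow> real) \<Rightarrow> real \<Rightarrow> tensor \<Rightarrow> tensor \<Rightarrow> bool" where
  "encodes_position d c V \<gamma> X Y \<longleftrightarrow> (\<forall>m\<in>{1..int d}. \<forall>n\<in>{1..int d}.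
     Y 1 m n = X 1 m n \<and> (\<Sum>r\<in>{1..c}. V r * Y r m n) + \<gamma> = of_int ((m - 1) * int d + n))"

lemma counter_layers_encode_position:
  assumes "k \<ge> 1" "d \<ge> 1" and X: "\<forall>m\<in>{1..int d}. \<forall>n\<in>{1..int d}. 0 \<le> X 1 m n"
  shows "encodes_position d 3 (\<lambda>r. if r = 2 then real d else if r = 3 then 1 else 0) (- real d)
           X (cnn_eval d k (counter_layers d) X)"
proof -
  have "counts_to d X (cnn_eval d k (counter_layers d) X) (int d)"
    using counts_to_counter_layers[where t = d] assms by simp
  moreover have "{1..3::nat} = {1, 2, 3}" by auto
  ultimately show ?thesis
    unfolding encodes_position_def counts_to_def by (auto simp: algebra_simps)
qed

text \<open>The four layers below evaluate the hat at the pixel with linear index p. Layer 1 produces the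
  ramps relu (p - q) for q \<le> N together with a copy of x; layer 2 produces relu (w j) and
  relu (- w j) for w j = 2^(l j) x - i j + (i j + 1) \<bar>p - j\<bar>, using
  \<bar>p - j\<bar> = 2 relu (p - j) - relu (p - 1) + (j - 1); layer 3 forms
  hat (w j) = relu (1 - relu (w j) - relu (- w j)); layer 4 sums over j. The weight i j + 1 forces
  w j \<ge> 1, hence hat (w j) = 0, for every j \<noteq> p.\<close>

definition ramp_weights :: "nat \<Rightarrow> (nat \<Rightarrow> real) \<Rightarrow> nat \<Rightarrow> nat \<Rightarrow> real" where
  "ramp_weights N V q r = (if q \<le> N then V r else if q = N + 1 \<and> r = 1 then 1 else 0)"

definition ramp_bias :: "nat \<Rightarrow> real \<Rightarrow> nat \<Rightarrow> real" where
  "ramp_bias N \<gamma> q = (if q \<le> N then \<gamma> - real q else 0)"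

definition hat_arg_weights :: "nat \<Rightarrow> (nat \<Rightarrow> nat) \<Rightarrow> (nat \<Rightarrow> nat) \<Rightarrow> nat \<Rightarrow> nat \<Rightarrow> real" where
  "hat_arg_weights N l i j r =
     (if r = N + 1 then 2 ^ l j else 0) + (if r = j then 2 * (real (i j) + 1) else 0)
     - (if r = 1 then real (i j) + 1 else 0)"

definition hat_arg_bias :: "(nat \<Rightarrow> nat) \<Rightarrow> nat \<Rightarrow> real" where
  "hat_arg_bias i j = (real (i j) + 1) * (real j - 1) - real (i j)"

definition sign_split_weights :: "nat \<Rightarrow> (nat \<Rightarrow> nat) \<Rightarrow> (nat \<Rightarrow> nat) \<Rightarrow> nat \<Rightarrow> nat \<Rightarrow> real" where
  "sign_split_weights N l i q r =
     (if q \<le> N then hat_arg_weights N l i q r else - hat_arg_weights N l i (q - N) r)"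

definition sign_split_bias :: "nat \<Rightarrow> (nat \<Rightarrow> nat) \<Rightarrow> nat \<Rightarrow> real" where
  "sign_split_bias N i q = (if q \<le> N then hat_arg_bias i q else - hat_arg_bias i (q - N))"

definition hat_weights :: "nat \<Rightarrow> nat \<Rightarrow> nat \<Rightarrow> real" where
  "hat_weights N q r = - (if r = q then 1 else 0) - (if r = N + q then 1 else 0)"

definition hat_selector_layers ::
    "nat \<Rightarrow> nat \<Rightarrow> (nat \<Rightarrow> real) \<Rightarrow> real \<Rightarrow> (nat \<Rightarrow> nat) \<Rightarrow> (nat \<Rightarrow> nat) \<Rightarrow> layer list" where
  "hat_selector_layers N c V \<gamma> l i =
     [(c, N + 1, pointwise_kernel (ramp_weights N V), ramp_bias N \<gamma>),
      (N + 1, 2 * N, pointwise_kernel (sign_split_weights N l i), sign_split_bias N i),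
      (2 * N, N, pointwise_kernel (hat_weights N), \<lambda>_. 1),
      (N, 1, pointwise_kernel (\<lambda>_ _. 1), \<lambda>_. 0)]"

lemma hat_arg_affine:
  fixes z :: "nat \<Rightarrow> real"
  assumes j: "j \<in> {1..N}" and "p \<ge> 1"
    and ramp: "\<And>q. q \<in> {1..N} \<Longrightarrow> z q = relu (real p - real q)" and "z (N + 1) = x"
  shows "(\<Sum>r\<in>{1..N + 1}. hat_arg_weights N l i j r * z r) + hat_arg_bias i j
       = 2 ^ l j * x - real (i j) + (real (i j) + 1) * \<bar>real p - real j\<bar>"
proof -
  have "(\<Sum>r\<in>{1..N + 1}. hat_arg_weights N l i j r * z r)
      = (\<Sum>r\<in>{1..N + 1}. (if r = N + 1 then 2 ^ l j else 0) * z r)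
        + (\<Sum>r\<in>{1..N + 1}. (if r = j then 2 * (real (i j) + 1) else 0) * z r)
        - (\<Sum>r\<in>{1..N + 1}. (if r = 1 then real (i j) + 1 else 0) * z r)"
    unfolding hat_arg_weights_def by (simp add: algebra_simps sum.distrib sum_subtractf)
  also have "\<dots> = 2 ^ l j * x + 2 * (real (i j) + 1) * relu (real p - real j)
                 - (real (i j) + 1) * (real p - 1)"
    using j assms(2-4) ramp[of 1] by (simp add: sum_delta_mult relu_def)
  finally show ?thesis
    unfolding hat_arg_bias_def relu_def by (cases "p \<le> j") (simp_all add: algebra_simps)
qed

lemma hat_selector_layers_eval:
  assumes m: "m \<in> {1..int d}" and n: "n \<in> {1..int d}" and "c \<ge> 1" and p: "p \<in> {1..N}"
    and position: "(\<Sum>r\<in>{1..c}. V r * Y r m n) + \<gamma> = real p"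
    and x: "Y 1 m n = x" "0 \<le> x"
  shows "cnn_eval d k (hat_selector_layers N c V \<gamma> l i) Y 1 m n = hat_li (l p) (i p) x"
proof -
  note conv_eq = conv_pointwise_kernel[OF m n]
  define Z where "Z = cnn_layer d k c (pointwise_kernel (ramp_weights N V)) (ramp_bias N \<gamma>) Y"
  have ramp: "Z q m n = relu (real p - real q)" if "q \<in> {1..N}" for q
    using that position unfolding Z_def cnn_layer_def conv_eq
    by (simp add: ramp_weights_def ramp_bias_def add_diff_eq)
  have "Z (N + 1) m n = x"
    using \<open>c \<ge> 1\<close> x unfolding Z_def cnn_layer_def conv_eq
    by (simp add: ramp_weights_def ramp_bias_def sum_delta_mult relu_def)
  define w where "w j = 2 ^ l j * x - real (i j) + (real (i j) + 1) * \<bar>real p - real j\<bar>" for j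
  have hat_arg: "(\<Sum>r\<in>{1..N + 1}. hat_arg_weights N l i j r * Z r m n) + hat_arg_bias i j = w j"
    if "j \<in> {1..N}" for j
    unfolding w_def using that p ramp \<open>Z (N + 1) m n = x\<close> by (intro hat_arg_affine) auto
  define A where "A = cnn_layer d k (N + 1) (pointwise_kernel (sign_split_weights N l i)) (sign_split_bias N i) Z"
  have A: "A j m n = relu (w j)" "A (N + j) m n = relu (- w j)" if "j \<in> {1..N}" for j
    using that unfolding A_def cnn_layer_def conv_eq
    by (simp_all add: sign_split_weights_def sign_split_bias_def sum_negf flip: hat_arg[OF that])
  define H where "H = cnn_layer d k (2 * N) (pointwise_kernel (hat_weights N)) (\<lambda>_. 1) A"
  have "H j m n = hat (w j)" if "j \<in> {1..N}" for j
  proof -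
    have "(\<Sum>r\<in>{1..2 * N}. hat_weights N j r * A r m n) = - A j m n - A (N + j) m n"
      using that unfolding hat_weights_def
      by (simp add: left_diff_distrib sum_subtractf sum_negf sum_delta_mult)
    then have "(\<Sum>r\<in>{1..2 * N}. hat_weights N j r * A r m n) + 1 = 1 - relu (w j) - relu (- w j)"
      using A[OF that] by linarith
    then show ?thesis
      unfolding H_def cnn_layer_def conv_eq hat_eq_relu by (simp only:)
  qed
  then have "(\<Sum>j\<in>{1..N}. H j m n) = hat_li (l p) (i p) x"
    using sum_hats_at_position[OF \<open>0 \<le> x\<close> p, of l i] by (simp add: w_def)
  moreover have "cnn_eval d k (hat_selector_layers N c V \<gamma> l i) Y 1 m n = relu (\<Sum>j\<in>{1..N}. H j m n)"
    unfolding hat_selector_layers_def H_def A_def Z_def by (simp add: cnn_layer_def conv_eq)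
  moreover have "hat_li (l p) (i p) x \<ge> 0"
    by (simp add: hat_li_def hat_def)
  ultimately show ?thesis by (simp add: relu_def)
qed

lemma hat_network_from_position_encoder:
  fixes P :: "layer list"
  assumes "d \<ge> 1" "c \<ge> 1" and chain: "channels_chain 1 P c"
    and width: "\<forall>L\<in>set P. layer_cout L \<le> 2 * d^2" and depth: "length P + 4 \<le> L"
    and encoder: "\<forall>X. (\<forall>m\<in>{1..int d}. \<forall>n\<in>{1..int d}. 0 \<le> X 1 m n) \<longrightarrow>
                        encodes_position d c V \<gamma> X (cnn_eval d k P X)"
  shows "\<exists>f \<in> CNN_class d k 1 1 (2 * d^2) L. \<forall>X :: tensor.
           (\<forall>m\<in>{1..int d}. \<forall>n\<in>{1..int d}. 0 \<le> X 1 m n) \<longrightarrow>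
           (\<forall>m\<in>{1..int d}. \<forall>n\<in>{1..int d}.
              f X 1 m n = hat_li (l (nat ((m - 1) * int d + n))) (i (nat ((m - 1) * int d + n))) (X 1 m n))"
proof -
  define N where "N = d^2"
  define Ls where "Ls = P @ hat_selector_layers N c V \<gamma> l i @ replicate (L - length P - 4) identity_layer"
  have "N \<ge> 1" using \<open>d \<ge> 1\<close> by (simp add: N_def)
  have "cnn_arch 1 1 (2 * d^2) L Ls"
  proof (rule cnn_arch_if_channels_chain)
    show "channels_chain 1 Ls 1"
      using chain channels_chain_replicate
      unfolding Ls_def channels_chain_append hat_selector_layers_def identity_layer_def by auto
    show "Ls \<noteq> []" "length Ls = L"
      using depth by (auto simp: Ls_def hat_selector_layers_def)
    show "2 * d^2 = Max (layer_cout ` set Ls)"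
      using width \<open>N \<ge> 1\<close>
      by (intro Max_eqI[symmetric])
         (auto simp: Ls_def hat_selector_layers_def identity_layer_def layer_cout_def N_def)
  qed
  then have "cnn_eval d k Ls \<in> CNN_class d k 1 1 (2 * d^2) L"
    unfolding CNN_class_def by blast
  moreover have "cnn_eval d k Ls X 1 m n = hat_li (l (nat ((m - 1) * int d + n))) (i (nat ((m - 1) * int d + n))) (X 1 m n)"
    if X: "\<forall>m\<in>{1..int d}. \<forall>n\<in>{1..int d}. 0 \<le> X 1 m n" and "m \<in> {1..int d}" "n \<in> {1..int d}" for X m n
  proof -
    have position: "encodes_position d c V \<gamma> X (cnn_eval d k P X)"
      using encoder X by blast
    define T where "T = cnn_eval d k (hat_selector_layers N c V \<gamma> l i) (cnn_eval d k P X)"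
    have T: "T 1 m n = hat_li (l (nat ((m - 1) * int d + n))) (i (nat ((m - 1) * int d + n))) (X 1 m n)"
      if "m \<in> {1..int d}" "n \<in> {1..int d}" for m n
      unfolding T_def
      using position that X pixel_index_range[OF that] \<open>c \<ge> 1\<close>
      by (intro hat_selector_layers_eval) (auto simp: encodes_position_def N_def)
    then have "\<forall>m\<in>{1..int d}. \<forall>n\<in>{1..int d}. 0 \<le> T 1 m n"
      by (simp add: hat_li_def hat_def)
    from identity_layers_eval[where Y = T, OF this] T that(2,3) show ?thesis
      by (simp add: Ls_def T_def cnn_eval_append)
  qed
  ultimately show ?thesis by blast
qed

theorem lemmaC2:
  fixes k d :: nat and l i :: "nat \<Rightarrow> nat"
  assumes "k \<ge> 1" and "d \<ge> 1"
    and "\<forall>j\<in>{1..d^2}. l j \<ge> 1"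
    and "i \<in> I_set (d^2) l"
  shows "\<exists>f \<in> CNN_class d k 1 1 (2 * d^2) (nat \<lfloor>5/2 * real d\<rfloor> + 3).
           \<forall>X :: tensor.
             (\<forall>m\<in>{1..int d}. \<forall>n\<in>{1..int d}. 0 \<le> X 1 m n \<and> X 1 m n \<le> 1) \<longrightarrow>
             (\<forall>m\<in>{1..int d}. \<forall>n\<in>{1..int d}.
                f X 1 m n = hat_li (l (nat ((m - 1) * int d + n))) (i (nat ((m - 1) * int d + n))) (X 1 m n))"
proof -
  obtain P c V \<gamma> where "c \<ge> 1" and chain: "channels_chain 1 P c"
    and width: "\<forall>L\<in>set P. layer_cout L \<le> 2 * d^2" and "length P \<le> d"
    and encoder: "\<forall>X. (\<forall>m\<in>{1..int d}. \<forall>n\<in>{1..int d}. 0 \<le> X 1 m n) \<longrightarrow>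
                        encodes_position d c V \<gamma> X (cnn_eval d k P X)"
  proof (cases "d = 1")
    case True
    \<comment> \<open>The three counter channels would exceed the width 2 d^2 = 2, but the index is constantly 1.\<close>
    show ?thesis
      by (rule that[of 1 "[]" "\<lambda>_. 0" 1]) (use True in \<open>auto simp: encodes_position_def\<close>)
  next
    case False
    then have "2 ^ 2 \<le> d^2"
      using \<open>d \<ge> 1\<close> power_mono[of 2 d 2] by simp
    then show ?thesis
      using counter_layers_encode_position[OF assms(1,2)] \<open>d \<ge> 1\<close>
      by (intro that[of 3 "counter_layers d"])
         (auto simp: counter_layers_def layer_cout_def channels_chain_replicate)
  qed
  have "2 * d \<le> nat \<lfloor>5/2 * real d\<rfloor>"
    by (simp add: le_nat_iff le_floor_iff)
  with \<open>length P \<le> d\<close> \<open>d \<ge> 1\<close> have "length P + 4 \<le> nat \<lfloor>5/2 * real d\<rfloor> + 3"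
    by linarith
  from hat_network_from_position_encoder[where l = l and i = i, OF \<open>d \<ge> 1\<close> \<open>c \<ge> 1\<close> chain width this encoder]
  show ?thesis
    by (elim bexE) (intro bexI; fast)
qed

end
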